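(* Let $\alpha_1,\dots,\alpha_n\in\Gamma$ be linearly independent over $\mathbb{R}$, and let $A$ and $\mathcal{V}$ be the matrices defined in the context. Fix $i\neq j$ and an integer $p\ge3$. Suppose that either $\operatorname{len}(\alpha_j-\alpha_i)\ge p$, or both of the following hold: (Q) for all $k\notin\{i,j\}$, $$\langle\alpha_j,\alpha_i\rangle\langle\alpha_j-\alpha_k,\alpha_k-\alpha_i\rangle=\langle\alpha_j,\alpha_k\rangle\langle\alpha_k,\alpha_i\rangle;$$ (V) for every ordered pair $(\beta,\gamma)$ of nonzero elements of $\Gamma$ with $\beta+\gamma=\alpha_j-\alpha_i$ that is not of the form $(\alpha_j-\alpha_k,\alpha_k-\alpha_i)$ or $(\alpha_k-\alpha_i,\alpha_j-\alpha_k)$ for some $k\notin\{i,j\}$, one has $\langle\beta,\gamma\rangle f^\beta f^\gamma\in(\mathbf{s})^p$. Then the $(j,i)$ entry of the covariant derivative $d\mathcal{V}+A\mathcal{V}-\mathcal{V}A$ lies in $(\mathbf{s})^p$.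
   Context: Let $\Gamma\cong\mathbb{Z}^n$ be a lattice with basis $[S_1],\dots,[S_n]$, and let $\langle-,-\rangle:\Gamma\times\Gamma\to\mathbb{Z}$ be a skew-symmetric bilinear form. For $\alpha=\sum_i a_i[S_i]$ set $\operatorname{len}(\alpha)=\sum_i|a_i|$. Let $U\subset\operatorname{Hom}(\Gamma,\mathbb{C})$ be a connected open set; for $\alpha\in\Gamma$, $Z(\alpha)$ is a linear holomorphic function on $U$. Let $\mathbf{s}=(s_1,\dots,s_n)$ be formal variables, and let $R$ be the ring of formal power series in $\mathbf{s}$ with coefficients holomorphic on $U$. Differential forms with coefficients in $R$ are power series in $\mathbf{s}$ whose coefficients are holomorphic forms, and $d$ acts coefficientwise. $(\mathbf{s})^p$ denotes the series (or forms) all of whose monomials have total degree at least $p$. Let $\{f^\alpha\}_{\alpha\in\Gamma\setminus\{0\}}\subset R$ satisfy: (i) $f^\alpha\in(\mathbf{s})^{\operatorname{len}(\alpha)}$; (ii) if $f^\alpha\neq0$ then $Z(\alpha)$ is nowhere zero on $U$; (iii) the Joyce PDE $$df^\alpha=-\sum_{\beta+\gamma=\alpha,\ \beta,\gamma\neq0}(-1)^{\langle\beta,\gamma\rangle}\langle\beta,\gamma\rangle f^\beta f^\gamma\, d\log Z(\beta)$$ holds, summing over ordered pairs. Define the $n\times n$ matrices $A$ (of $1$-forms) and $\mathcal{V}$ (with entries in $R$) by $A_{kk}=\mathcal{V}_{kk}=0$ and, for $k\neq l$, $$\mathcal{V}_{kl}=(-1)^{\langle\alpha_k,\alpha_l\rangle}\langle\alpha_k,\alpha_l\rangle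 f^{\alpha_k-\alpha_l},\qquad A_{kl}=\mathcal{V}_{kl}\,d\log Z(\alpha_k-\alpha_l),$$ with $A_{kl}=0$ when $f^{\alpha_k-\alpha_l}=0$. *)

theory Defs
  imports "HOL-Analysis.Analysis" "HOL-Library.Function_Algebras"
begin

text \<open>The lattice \<Gamma> = Z^n is modelled as functions 'n \<Rightarrow> int (coordinates w.r.t. the basis [S_i],
  indexed by a finite type 'n with CARD('n) = n).
  Hom(\<Gamma>, C) is identified with complex^'n via z_i = z([S_i]); then Z(\<alpha>)(z) = \<Sum>_i \<alpha>_i z_i.
  The formal variables s_1..s_n are also indexed by 'n; a monomial is an exponent vector 'n \<Rightarrow> nat.
  An element of R (formal power series in s with coefficients holomorphic on U) is a map
  from monomials to coefficient functions complex^'n \<Rightarrow> complex (only their values on U matter).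
  A 1-form with coefficients in R is written \<Sum>_i g_i dz_i and is modelled by its components
  'n \<Rightarrow> series.\<close>

type_synonym 'n lat = "'n \<Rightarrow> int"
type_synonym 'n mono = "'n \<Rightarrow> nat"
type_synonym 'n ser = "'n mono \<Rightarrow> complex ^ 'n \<Rightarrow> complex"
type_synonym 'n form1 = "'n \<Rightarrow> 'n ser"

definition skew_bilinear :: "('n lat \<Rightarrow> 'n lat \<Rightarrow> int) \<Rightarrow> bool" where
  "skew_bilinear B \<longleftrightarrow>
     (\<forall>a b c. B (a + b) c = B a c + B b c) \<and>
     (\<forall>a b c. B a (b + c) = B a b + B a c) \<and>
     (\<forall>a b. B a b = - B b a)"

definition len :: "'n::finite lat \<Rightarrow> nat" where
  "len \<alpha> = (\<Sum>i\<in>UNIV. nat \<bar>\<alpha> i\<bar>)"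

definition deg :: "'n::finite mono \<Rightarrow> nat" where
  "deg m = (\<Sum>i\<in>UNIV. m i)"

definition Zc :: "'n::finite lat \<Rightarrow> complex ^ 'n \<Rightarrow> complex" where
  "Zc \<alpha> z = (\<Sum>i\<in>UNIV. of_int (\<alpha> i) * z $ i)"

definition lin_indep_R :: "('k::finite \<Rightarrow> 'n::finite lat) \<Rightarrow> bool" where
  "lin_indep_R a \<longleftrightarrow>
     (\<forall>c::'k \<Rightarrow> real. (\<forall>i. (\<Sum>k\<in>UNIV. c k * of_int (a k i)) = 0) \<longrightarrow> (\<forall>k. c k = 0))"

definition holo_on :: "(complex ^ 'n::finite) set \<Rightarrow> (complex ^ 'n \<Rightarrow> complex) \<Rightarrow> bool" where
  "holo_on U g \<longleftrightarrow>
     (\<forall>z\<in>U. \<exists>L. (g has_derivative L) (at z) \<and> (\<forall>c v. L (c *s v) = c * L v))"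

definition in_R :: "(complex ^ 'n::finite) set \<Rightarrow> 'n ser \<Rightarrow> bool" where
  "in_R U g \<longleftrightarrow> (\<forall>m. holo_on U (g m))"

definition ser_is_zero :: "(complex ^ 'n::finite) set \<Rightarrow> 'n ser \<Rightarrow> bool" where
  "ser_is_zero U g \<longleftrightarrow> (\<forall>m. \<forall>z\<in>U. g m z = 0)"

definition in_ideal :: "(complex ^ 'n::finite) set \<Rightarrow> nat \<Rightarrow> 'n ser \<Rightarrow> bool" where
  "in_ideal U p g \<longleftrightarrow> (\<forall>m. deg m < p \<longrightarrow> (\<forall>z\<in>U. g m z = 0))"

definition form_in_ideal :: "(complex ^ 'n::finite) set \<Rightarrow> nat \<Rightarrow> 'n form1 \<Rightarrow> bool" where
  "form_in_ideal U p \<omega> \<longleftrightarrow> (\<forall>i. in_ideal U p (\<omega> i))"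

definition ser_mult :: "'n::finite ser \<Rightarrow> 'n ser \<Rightarrow> 'n ser" where
  "ser_mult f g = (\<lambda>m z. \<Sum>a\<in>{a. \<forall>i. a i \<le> m i}. f a z * g (m - a) z)"

definition ser_scale :: "complex \<Rightarrow> 'n ser \<Rightarrow> 'n ser" where
  "ser_scale c g = (\<lambda>m z. c * g m z)"

definition dser :: "'n::finite ser \<Rightarrow> 'n form1" where
  "dser g = (\<lambda>i m z. frechet_derivative (g m) (at z) (axis i 1))"

text \<open>d log Z(\<beta>) = \<Sum>_i \<beta>_i dz_i / Z(\<beta>), as a 1-form with coefficients in R (constant in s).\<close>
definition dlogZ :: "'n::finite lat \<Rightarrow> 'n form1" where
  "dlogZ \<beta> = (\<lambda>i m z. if m = 0 then of_int (\<beta> i) / Zc \<beta> z else 0)"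

definition form_smult :: "'n::finite ser \<Rightarrow> 'n form1 \<Rightarrow> 'n form1" where
  "form_smult g \<omega> = (\<lambda>i. ser_mult g (\<omega> i))"

definition form_multr :: "'n::finite form1 \<Rightarrow> 'n ser \<Rightarrow> 'n form1" where
  "form_multr \<omega> g = (\<lambda>i. ser_mult (\<omega> i) g)"

definition form_add :: "'n form1 \<Rightarrow> 'n form1 \<Rightarrow> 'n form1" where
  "form_add \<omega> \<eta> = (\<lambda>i m z. \<omega> i m z + \<eta> i m z)"

definition form_sub :: "'n form1 \<Rightarrow> 'n form1 \<Rightarrow> 'n form1" where
  "form_sub \<omega> \<eta> = (\<lambda>i m z. \<omega> i m z - \<eta> i m z)"

definition form_sum :: "('k \<Rightarrow> 'n form1) \<Rightarrow> 'k set \<Rightarrow> 'n form1" where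
  "form_sum F K = (\<lambda>i m z. \<Sum>k\<in>K. F k i m z)"

definition sgnpow :: "int \<Rightarrow> complex" where
  "sgnpow k = (-1) powi k"

text \<open>The sum over ordered pairs (\<beta>, \<alpha>-\<beta>) is a formal sum of series; coefficientwise it is
  an (unconditional) sum of complex numbers, which by (i) has only finitely many nonzero terms.\<close>
definition joyce_pde ::
  "(complex ^ 'n::finite) set \<Rightarrow> ('n lat \<Rightarrow> 'n lat \<Rightarrow> int) \<Rightarrow> ('n lat \<Rightarrow> 'n ser) \<Rightarrow> bool" where
  "joyce_pde U B f \<longleftrightarrow>
     (\<forall>\<alpha>. \<alpha> \<noteq> 0 \<longrightarrow> (\<forall>i m. \<forall>z\<in>U.
        dser (f \<alpha>) i m z =
          - (\<Sum>\<^sub>\<infinity>\<beta>\<in>{\<beta>. \<beta> \<noteq> 0 \<and> \<alpha> - \<beta> \<noteq> 0}.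
               sgnpow (B \<beta> (\<alpha> - \<beta>)) * of_int (B \<beta> (\<alpha> - \<beta>))
                 * ser_mult (ser_mult (f \<beta>) (f (\<alpha> - \<beta>))) (dlogZ \<beta> i) m z)))"

definition Vmat ::
  "('n::finite lat \<Rightarrow> 'n lat \<Rightarrow> int) \<Rightarrow> ('n lat \<Rightarrow> 'n ser) \<Rightarrow> ('k \<Rightarrow> 'n lat) \<Rightarrow> 'k \<Rightarrow> 'k \<Rightarrow> 'n ser" where
  "Vmat B f a k l =
     (if k = l then (\<lambda>m z. 0)
      else ser_scale (sgnpow (B (a k) (a l)) * of_int (B (a k) (a l))) (f (a k - a l)))"

definition Amat ::
  "(complex ^ 'n::finite) set \<Rightarrow> ('n lat \<Rightarrow> 'n lat \<Rightarrow> int) \<Rightarrow> ('n lat \<Rightarrow> 'n ser) \<Rightarrow> ('k \<Rightarrow> 'n lat)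
     \<Rightarrow> 'k \<Rightarrow> 'k \<Rightarrow> 'n form1" where
  "Amat U B f a k l =
     (if k = l \<or> ser_is_zero U (f (a k - a l)) then (\<lambda>i m z. 0)
      else form_smult (Vmat B f a k l) (dlogZ (a k - a l)))"

definition covD ::
  "(complex ^ 'n::finite) set \<Rightarrow> ('n lat \<Rightarrow> 'n lat \<Rightarrow> int) \<Rightarrow> ('n lat \<Rightarrow> 'n ser) \<Rightarrow> ('k::finite \<Rightarrow> 'n lat)
     \<Rightarrow> 'k \<Rightarrow> 'k \<Rightarrow> 'n form1" where
  "covD U B f a j i =
     form_sub
       (form_add (dser (Vmat B f a j i))
                 (form_sum (\<lambda>k. form_multr (Amat U B f a j k) (Vmat B f a k i)) UNIV))
       (form_sum (\<lambda>k. form_smult (Vmat B f a j k) (Amat U B f a k i)) UNIV)"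

end

theory Submission
  imports Defs
begin

(* Only the terms k \<notin> {i, j} of AV - VA survive, and together they contribute
   (dlog Z(a_j - a_k) - dlog Z(a_k - a_i)) V_jk V_ki.
   If len(a_j - a_i) \<ge> p, then f^(a_j - a_i) and, by the triangle inequality for len, all
   products f^(a_j - a_k) f^(a_k - a_i) lie in (s)^p, so everything vanishes below degree p.
   Otherwise the Joyce PDE expresses d f^(a_j - a_i) as a sum over splittings; below degree p
   only the splittings (a_j - a_k, a_k - a_i) and their swaps survive by (V), and these are
   pairwise distinct by linear independence. Condition (Q) is exactly the sign identity
   V_ji (-1)^b b = V_jk V_ki with b = <a_j - a_k, a_k - a_i>, so the two contributions cancel. *)

subsection \<open>Formal power series with holomorphic coefficients\<close>

lemma finite_monomials_le: "finite {a::'n::finite mono. \<forall>i. a i \<le> m i}"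
proof -
  have "{a::'n mono. \<forall>i. a i \<le> m i} = PiE UNIV (\<lambda>i. {..m i})"
    by (auto simp: PiE_def Pi_def extensional_def)
  then show ?thesis by (simp add: finite_PiE)
qed

lemma deg_add_diff: "\<forall>i. a i \<le> m i \<Longrightarrow> deg a + deg (m - a) = deg (m :: 'n::finite mono)"
  unfolding deg_def by (simp add: sum.distrib[symmetric])

lemma ser_mult_commute: "ser_mult g h = ser_mult h g"
proof (intro ext)
  fix m z
  have involution: "\<forall>i. a i \<le> m i \<Longrightarrow> m - (m - a) = a" for a :: "'a mono"
    by (auto simp: fun_eq_iff)
  show "ser_mult g h m z = ser_mult h g m z"
    unfolding ser_mult_def
    by (rule sum.reindex_bij_witness[where i="\<lambda>a. m - a" and j="\<lambda>a. m - a"])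
       (auto simp: involution)
qed

lemma ser_mult_scale: "ser_mult (ser_scale c g) (ser_scale c' h) m z = c * c' * ser_mult g h m z"
  unfolding ser_mult_def ser_scale_def by (simp add: sum_distrib_left mult_ac)

lemma ser_mult_mult_left: "ser_mult (\<lambda>m z. g m z * c z) h m z = c z * ser_mult g h m z"
  unfolding ser_mult_def by (simp add: sum_distrib_left mult_ac)

lemma ser_mult_mult_right: "ser_mult g (\<lambda>m z. h m z * c z) m z = c z * ser_mult g h m z"
  unfolding ser_mult_def by (simp add: sum_distrib_left mult_ac)

lemma ser_mult_eq_0_if_zero_left: "ser_is_zero U g \<Longrightarrow> z \<in> U \<Longrightarrow> ser_mult g h m z = 0"
  unfolding ser_mult_def ser_is_zero_def by simp

lemma ser_mult_eq_0_if_in_ideal: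
  assumes "in_ideal U P g" "in_ideal U Q h" "deg m < P + Q" "z \<in> U"
  shows "ser_mult g h m z = 0"
  unfolding ser_mult_def
proof (rule sum.neutral, safe)
  fix a assume "\<forall>i. a i \<le> m i"
  then have "deg a + deg (m - a) = deg m" by (rule deg_add_diff)
  then have "deg a < P \<or> deg (m - a) < Q"
    using assms(3) by linarith
  then show "g a z * h (m - a) z = 0"
    using assms(1,2,4) unfolding in_ideal_def by auto
qed

definition dlogZ_coeff :: "'n::finite lat \<Rightarrow> 'n \<Rightarrow> complex ^ 'n \<Rightarrow> complex" where
  "dlogZ_coeff \<beta> r z = of_int (\<beta> r) / Zc \<beta> z"

lemma ser_mult_dlogZ: "ser_mult g (dlogZ \<beta> r) = (\<lambda>m z. g m z * dlogZ_coeff \<beta> r z)"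
proof (intro ext)
  fix m z
  have "ser_mult g (dlogZ \<beta> r) m z =
      (\<Sum>a\<in>{a. \<forall>i. a i \<le> m i}. if a = m then g m z * dlogZ_coeff \<beta> r z else 0)"
    unfolding ser_mult_def dlogZ_def dlogZ_coeff_def
  proof (rule sum.cong)
    fix a assume "a \<in> {a. \<forall>i. a i \<le> m i}"
    then have "m - a = 0 \<longleftrightarrow> a = m"
      by (auto simp: fun_eq_iff le_antisym)
    then show "g a z * (if m - a = 0 then of_int (\<beta> r) / Zc \<beta> z else 0)
        = (if a = m then g m z * (of_int (\<beta> r) / Zc \<beta> z) else 0)"
      by auto
  qed simp
  also have "\<dots> = g m z * dlogZ_coeff \<beta> r z"
    using finite_monomials_le[of m] by simp
  finally show "ser_mult g (dlogZ \<beta> r) m z = g m z * dlogZ_coeff \<beta> r z" .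
qed

lemma dser_scale:
  assumes "(g m has_derivative L) (at z)"
  shows "dser (ser_scale c g) r m z = c * dser g r m z"
proof -
  have "((\<lambda>z. c * g m z) has_derivative (\<lambda>v. c * L v)) (at z)"
    using assms by (rule has_derivative_mult_right)
  then show ?thesis
    using assms unfolding dser_def ser_scale_def by (metis frechet_derivative_at)
qed

lemma dser_eq_0_if_vanishing:
  assumes "open U" "z \<in> U" "\<forall>z\<in>U. g m z = 0"
  shows "dser g r m z = 0"
proof -
  have "(g m has_derivative (\<lambda>_. 0)) (at z)"
    by (rule has_derivative_transform_within_open[OF has_derivative_const assms(1,2)])
       (use assms(3) in auto)
  then show ?thesis unfolding dser_def by (metis frechet_derivative_at)
qed

subsection \<open>The lattice and the pairing\<close>

lemma len_add_le: "len (x + y) \<le> len x + len (y :: 'n::finite lat)"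
proof -
  have "(\<Sum>i\<in>UNIV. nat \<bar>(x + y) i\<bar>) \<le> (\<Sum>i\<in>UNIV. nat \<bar>x i\<bar> + nat \<bar>y i\<bar>)"
    by (rule sum_mono) (simp add: nat_add_distrib[symmetric] nat_mono abs_triangle_ineq)
  then show ?thesis unfolding len_def by (simp add: sum.distrib)
qed

lemma skew_bilinearD:
  assumes "skew_bilinear B"
  shows "B (x - y) w = B x w - B y w" "B w (x - y) = B w x - B w y"
    and "B x x = 0" "B y x = - B x y"
proof -
  have add_left: "B (a + b) c = B a c + B b c"
    and add_right: "B a (b + c) = B a b + B a c"
    and skew: "B a b = - B b a" for a b c
    using assms unfolding skew_bilinear_def by blast+
  show "B (x - y) w = B x w - B y w" using add_left[of "x - y" y w] by simp
  show "B w (x - y) = B w x - B w y" using add_right[of w "x - y" y] by simp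
  show "B x x = 0" using skew[of x x] by simp
  show "B y x = - B x y" using skew[of y x] .
qed

lemma sgnpow_add: "sgnpow (x + y) = sgnpow x * sgnpow y"
  unfolding sgnpow_def by (simp add: power_int_add)

lemma sgnpow_uminus: "sgnpow (- x) = sgnpow x"
  unfolding sgnpow_def by (simp add: power_int_minus power_int_inverse[symmetric])

definition signed_pairing :: "('n lat \<Rightarrow> 'n lat \<Rightarrow> int) \<Rightarrow> 'n lat \<Rightarrow> 'n lat \<Rightarrow> complex" where
  "signed_pairing B x y = sgnpow (B x y) * of_int (B x y)"

lemma signed_pairing_swap:
  assumes "skew_bilinear B"
  shows "signed_pairing B y x = - signed_pairing B x y"
  using skew_bilinearD(4)[OF assms, of x y]
  by (simp add: signed_pairing_def sgnpow_uminus)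

text \<open>The signs agree by bilinearity alone; (Q) equates the integer factors.\<close>
lemma signed_pairing_split:
  assumes B: "skew_bilinear B"
    and Q: "B x z * B (x - y) (y - z) = B x y * B y z"
  shows "signed_pairing B x z * signed_pairing B (x - y) (y - z)
       = signed_pairing B x y * signed_pairing B y z"
proof -
  have "B x z + B (x - y) (y - z) = B x y + B y z"
    using skew_bilinearD(1-3)[OF B] by simp
  then have "sgnpow (B x z) * sgnpow (B (x - y) (y - z)) = sgnpow (B x y) * sgnpow (B y z)"
    by (metis sgnpow_add)
  moreover have "of_int (B x z) * of_int (B (x - y) (y - z)) = (of_int (B x y) * of_int (B y z) :: complex)"
    using Q by (metis of_int_mult)
  ultimately show ?thesis
    unfolding signed_pairing_def by (metis mult.assoc mult.left_commute)
qed

lemma lin_indep_R_int_coeffs: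
  assumes "lin_indep_R a" "\<And>x. (\<Sum>l\<in>UNIV. c l * a l x) = (0::int)"
  shows "c k = 0"
proof -
  have "(\<Sum>l\<in>UNIV. real_of_int (c l) * of_int (a l x)) = 0" for x
    using arg_cong[OF assms(2)[of x], of real_of_int] by simp
  then show ?thesis using assms(1) unfolding lin_indep_R_def by fastforce
qed

lemma sum_indicator_mult:
  fixes v :: "'a::finite \<Rightarrow> int"
  shows "(\<Sum>t\<in>UNIV. of_bool (t = k) * v t) = v k"
proof -
  have "(\<Sum>t\<in>UNIV. of_bool (t = k) * v t) = (\<Sum>t\<in>UNIV. if t = k then v k else 0)"
    by (rule sum.cong) auto
  then show ?thesis by simp
qed

lemma lin_indep_R_inj:
  assumes "lin_indep_R a"
  shows "inj a"
proof (rule injI, rule ccontr)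
  fix k l assume "a k = a l" "k \<noteq> l"
  then have "(\<Sum>t\<in>UNIV. (of_bool (t = k) - of_bool (t = l)) * a t x) = 0" for x
    by (simp add: left_diff_distrib sum_subtractf sum_indicator_mult del: of_bool_eq)
  from lin_indep_R_int_coeffs[OF assms this, of k] \<open>k \<noteq> l\<close> show False by simp
qed

lemma lin_indep_R_diff_ne:
  assumes "lin_indep_R a" "i \<noteq> j" "k \<notin> {i, j}" "k' \<notin> {i, j}"
  shows "a j - a k \<noteq> a k' - a i"
proof
  assume e: "a j - a k = a k' - a i"
  have "(\<Sum>t\<in>UNIV. (of_bool (t = j) - of_bool (t = k) - of_bool (t = k') + of_bool (t = i))
          * a t x) = 0" for x
    using fun_cong[OF e, of x]
    by (simp add: distrib_right left_diff_distrib sum_subtractf sum.distrib sum_indicator_mult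
        del: of_bool_eq)
  from lin_indep_R_int_coeffs[OF assms(1) this, of j] assms(2-4) show False by auto
qed

subsection \<open>The entry (j, i) of the covariant derivative\<close>

lemma Vmat_off_diag: "k \<noteq> l \<Longrightarrow> Vmat B f a k l = ser_scale (signed_pairing B (a k) (a l)) (f (a k - a l))"
  unfolding Vmat_def signed_pairing_def by simp

lemma Amat_mult_right:
  assumes "z \<in> U"
  shows "form_multr (Amat U B f a k l) h r m z
       = dlogZ_coeff (a k - a l) r z * ser_mult (Vmat B f a k l) h m z"
proof (cases "k = l \<or> ser_is_zero U (f (a k - a l))")
  case True
  then have "ser_is_zero U (Vmat B f a k l)"
    by (auto simp: Vmat_def ser_scale_def ser_is_zero_def)
  then have "ser_mult (Vmat B f a k l) h m z = 0"
    using assms by (rule ser_mult_eq_0_if_zero_left)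
  moreover have "ser_mult (\<lambda>m z. 0) h m z = 0"
    by (simp add: ser_mult_def)
  ultimately show ?thesis
    using True by (auto simp: form_multr_def Amat_def)
next
  case False
  then show ?thesis
    by (simp add: form_multr_def Amat_def form_smult_def ser_mult_dlogZ ser_mult_mult_left)
qed

lemma Amat_mult_left:
  assumes "z \<in> U"
  shows "form_smult g (Amat U B f a k l) r m z
       = dlogZ_coeff (a k - a l) r z * ser_mult g (Vmat B f a k l) m z"
  using Amat_mult_right[OF assms, of B f a k l g r m]
  by (simp add: form_multr_def form_smult_def Amat_def ser_mult_commute ser_mult_dlogZ
      ser_mult_mult_right split: if_splits)

definition splitting_term ::
  "('n::finite lat \<Rightarrow> 'n mono \<Rightarrow> complex ^ 'n \<Rightarrow> complex) \<Rightarrow> ('k \<Rightarrow> 'n lat) \<Rightarrow> 'k \<Rightarrow> 'k \<Rightarrow> 'k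
     \<Rightarrow> 'n \<Rightarrow> 'n mono \<Rightarrow> complex ^ 'n \<Rightarrow> complex" where
  "splitting_term f a j k i r m z =
     (dlogZ_coeff (a j - a k) r z - dlogZ_coeff (a k - a i) r z)
       * ser_mult (f (a j - a k)) (f (a k - a i)) m z"

lemma covD_eq:
  assumes "i \<noteq> j" "z \<in> U" "(f (a j - a i) m has_derivative L) (at z)"
  shows "covD U B f a j i r m z =
      signed_pairing B (a j) (a i) * dser (f (a j - a i)) r m z
    + (\<Sum>k\<in>UNIV - {i, j}. signed_pairing B (a j) (a k) * signed_pairing B (a k) (a i)
         * splitting_term f a j k i r m z)"
proof -
  let ?t = "\<lambda>k. (dlogZ_coeff (a j - a k) r z - dlogZ_coeff (a k - a i) r z)
                * ser_mult (Vmat B f a j k) (Vmat B f a k i) m z"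
  have "covD U B f a j i r m z = dser (Vmat B f a j i) r m z + (\<Sum>k\<in>UNIV. ?t k)"
    using assms(2)
    by (simp add: covD_def form_sub_def form_add_def form_sum_def Amat_mult_right
        Amat_mult_left left_diff_distrib sum_subtractf)
  also have "dser (Vmat B f a j i) r m z = signed_pairing B (a j) (a i) * dser (f (a j - a i)) r m z"
    using assms by (simp add: Vmat_off_diag dser_scale)
  also have "(\<Sum>k\<in>UNIV. ?t k) = (\<Sum>k\<in>UNIV - {i, j}. ?t k)"
    by (rule sum.mono_neutral_right) (auto simp: Vmat_def ser_mult_def)
  also have "\<dots> = (\<Sum>k\<in>UNIV - {i, j}. signed_pairing B (a j) (a k) * signed_pairing B (a k) (a i)
         * splitting_term f a j k i r m z)"
    by (rule sum.cong) (auto simp: Vmat_off_diag ser_mult_scale splitting_term_def)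
  finally show ?thesis .
qed

subsection \<open>Restricting the Joyce PDE below degree p\<close>

lemma joyce_pde_truncated:
  assumes pde: "joyce_pde U B f" and B: "skew_bilinear B" and indep: "lin_indep_R a"
    and ij: "i \<noteq> j" and z: "z \<in> U" and m: "deg m < p"
    and V: "\<forall>\<beta> \<gamma>. \<beta> \<noteq> 0 \<and> \<gamma> \<noteq> 0 \<and> \<beta> + \<gamma> = a j - a i \<and>
          \<not> (\<exists>k. k \<noteq> i \<and> k \<noteq> j \<and>
               ((\<beta> = a j - a k \<and> \<gamma> = a k - a i) \<or> (\<beta> = a k - a i \<and> \<gamma> = a j - a k)))
          \<longrightarrow> in_ideal U p (ser_scale (of_int (B \<beta> \<gamma>)) (ser_mult (f \<beta>) (f \<gamma>)))"
  shows "dser (f (a j - a i)) r m z =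
    - (\<Sum>k\<in>UNIV - {i, j}. signed_pairing B (a j - a k) (a k - a i) * splitting_term f a j k i r m z)"
proof -
  define \<alpha> where "\<alpha> = a j - a i"
  define T where "T \<beta> = signed_pairing B \<beta> (\<alpha> - \<beta>) * ser_mult (f \<beta>) (f (\<alpha> - \<beta>)) m z
                        * dlogZ_coeff \<beta> r z" for \<beta>
  define K where "K = UNIV - {i, j}"
  define left where "left k = a j - a k" for k
  define right where "right k = a k - a i" for k
  have a_eq: "a k = a l \<longleftrightarrow> k = l" for k l
    using lin_indep_R_inj[OF indep] by (simp add: inj_eq)
  have "dser (f \<alpha>) r m z = - (\<Sum>\<^sub>\<infinity>\<beta>\<in>{\<beta>. \<beta> \<noteq> 0 \<and> \<alpha> - \<beta> \<noteq> 0}. T \<beta>)"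
    using pde ij z
    unfolding joyce_pde_def T_def \<alpha>_def signed_pairing_def ser_mult_dlogZ
    by (simp add: a_eq mult.assoc)
  also have "(\<Sum>\<^sub>\<infinity>\<beta>\<in>{\<beta>. \<beta> \<noteq> 0 \<and> \<alpha> - \<beta> \<noteq> 0}. T \<beta>) = (\<Sum>\<^sub>\<infinity>\<beta>\<in>left ` K \<union> right ` K. T \<beta>)"
  proof (rule infsum_cong_neutral)
    fix \<beta> assume \<beta>: "\<beta> \<in> {\<beta>. \<beta> \<noteq> 0 \<and> \<alpha> - \<beta> \<noteq> 0} - (left ` K \<union> right ` K)"
    have "in_ideal U p (ser_scale (of_int (B \<beta> (\<alpha> - \<beta>))) (ser_mult (f \<beta>) (f (\<alpha> - \<beta>))))"
      using \<beta> by (intro V[rule_format]) (auto simp: \<alpha>_def K_def left_def right_def)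
    then show "T \<beta> = 0"
      using m z unfolding in_ideal_def ser_scale_def T_def signed_pairing_def by auto
  qed (auto simp: K_def left_def right_def \<alpha>_def a_eq)
  also have "\<dots> = (\<Sum>k\<in>K. T (left k) + T (right k))"
  proof -
    have "inj_on left K" "inj_on right K"
      unfolding inj_on_def left_def right_def by (simp_all add: a_eq)
    moreover have "left ` K \<inter> right ` K = {}"
      using lin_indep_R_diff_ne[OF indep ij] by (auto simp: K_def left_def right_def)
    ultimately show ?thesis
      by (simp add: sum.union_disjoint sum.reindex sum.distrib)
  qed
  also have "\<dots> = (\<Sum>k\<in>K. signed_pairing B (a j - a k) (a k - a i) * splitting_term f a j k i r m z)"
  proof (rule sum.cong)
    fix k
    have swap: "\<alpha> - left k = right k" "\<alpha> - right k = left k"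
      by (simp_all add: \<alpha>_def left_def right_def)
    show "T (left k) + T (right k)
        = signed_pairing B (a j - a k) (a k - a i) * splitting_term f a j k i r m z"
      unfolding T_def swap signed_pairing_swap[OF B, where x = "left k" and y = "right k"]
        ser_mult_commute[of "f (right k)"]
      by (simp add: splitting_term_def left_def right_def algebra_simps)
  qed simp
  finally show ?thesis
    unfolding \<alpha>_def K_def .
qed

lemma covD_vanishes_if_long:
  assumes U: "open U" and z: "z \<in> U" and m: "deg m < p" and ij: "i \<noteq> j"
    and indep: "lin_indep_R a"
    and f_i: "\<And>\<alpha>. \<alpha> \<noteq> 0 \<Longrightarrow> in_ideal U (len \<alpha>) (f \<alpha>)"
    and der: "(f (a j - a i) m has_derivative L) (at z)"
    and long: "len (a j - a i) \<ge> p"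
  shows "covD U B f a j i r m z = 0"
proof -
  have a_eq: "a k = a l \<longleftrightarrow> k = l" for k l
    using lin_indep_R_inj[OF indep] by (simp add: inj_eq)
  have "dser (f (a j - a i)) r m z = 0"
    using dser_eq_0_if_vanishing[OF U z] f_i[of "a j - a i"] ij m long
    unfolding in_ideal_def by (simp add: a_eq)
  moreover have "splitting_term f a j k i r m z = 0" if "k \<notin> {i, j}" for k
  proof -
    have "deg m < len (a j - a k) + len (a k - a i)"
      using len_add_le[of "a j - a k" "a k - a i"] m long by simp
    then have "ser_mult (f (a j - a k)) (f (a k - a i)) m z = 0"
      using that by (intro ser_mult_eq_0_if_in_ideal[OF f_i f_i _ z]) (auto simp: a_eq)
    then show ?thesis by (simp add: splitting_term_def)
  qed
  ultimately show ?thesis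
    by (simp add: covD_eq[where f = f and a = a, OF ij z der])
qed

lemma covD_vanishes_if_cancelling:
  assumes pde: "joyce_pde U B f" and B: "skew_bilinear B" and indep: "lin_indep_R a"
    and ij: "i \<noteq> j" and z: "z \<in> U" and m: "deg m < p"
    and der: "(f (a j - a i) m has_derivative L) (at z)"
    and Q: "\<forall>k. k \<noteq> i \<and> k \<noteq> j \<longrightarrow>
          B (a j) (a i) * B (a j - a k) (a k - a i) = B (a j) (a k) * B (a k) (a i)"
    and V: "\<forall>\<beta> \<gamma>. \<beta> \<noteq> 0 \<and> \<gamma> \<noteq> 0 \<and> \<beta> + \<gamma> = a j - a i \<and>
          \<not> (\<exists>k. k \<noteq> i \<and> k \<noteq> j \<and>
               ((\<beta> = a j - a k \<and> \<gamma> = a k - a i) \<or> (\<beta> = a k - a i \<and> \<gamma> = a j - a k)))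
          \<longrightarrow> in_ideal U p (ser_scale (of_int (B \<beta> \<gamma>)) (ser_mult (f \<beta>) (f \<gamma>)))"
  shows "covD U B f a j i r m z = 0"
proof -
  have "signed_pairing B (a j) (a k) * signed_pairing B (a k) (a i)
      = signed_pairing B (a j) (a i) * signed_pairing B (a j - a k) (a k - a i)"
    if "k \<in> UNIV - {i, j}" for k
    using signed_pairing_split[OF B] Q that by simp
  then have "(\<Sum>k\<in>UNIV - {i, j}. signed_pairing B (a j) (a k) * signed_pairing B (a k) (a i)
         * splitting_term f a j k i r m z)
    = signed_pairing B (a j) (a i) * (\<Sum>k\<in>UNIV - {i, j}.
         signed_pairing B (a j - a k) (a k - a i) * splitting_term f a j k i r m z)"
    by (simp add: sum_distrib_left mult.assoc)
  then show ?thesis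
    unfolding covD_eq[where f = f and a = a, OF ij z der]
      joyce_pde_truncated[where r = r, OF pde B indep ij z m V]
    by simp
qed

theorem lemma3p9:
  fixes U :: "(complex ^ 'n::finite) set"
    and B :: "('n \<Rightarrow> int) \<Rightarrow> ('n \<Rightarrow> int) \<Rightarrow> int"
    and f :: "('n \<Rightarrow> int) \<Rightarrow> ('n \<Rightarrow> nat) \<Rightarrow> complex ^ 'n \<Rightarrow> complex"
    and a :: "'n \<Rightarrow> ('n \<Rightarrow> int)"
    and i j :: 'n
    and p :: nat
  assumes B: "skew_bilinear B"
    and U: "open U" "connected U"
    and fR: "\<And>\<alpha>. \<alpha> \<noteq> 0 \<Longrightarrow> in_R U (f \<alpha>)"
    and f_i: "\<And>\<alpha>. \<alpha> \<noteq> 0 \<Longrightarrow> in_ideal U (len \<alpha>) (f \<alpha>)"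
    and f_ii: "\<And>\<alpha>. \<alpha> \<noteq> 0 \<Longrightarrow> \<not> ser_is_zero U (f \<alpha>) \<Longrightarrow> (\<forall>z\<in>U. Zc \<alpha> z \<noteq> 0)"
    and f_iii: "joyce_pde U B f"
    and indep: "lin_indep_R a"
    and ij: "i \<noteq> j"
    and p: "p \<ge> 3"
    and hyp: "len (a j - a i) \<ge> p \<or>
      ((\<forall>k. k \<noteq> i \<and> k \<noteq> j \<longrightarrow>
          B (a j) (a i) * B (a j - a k) (a k - a i) = B (a j) (a k) * B (a k) (a i)) \<and>
       (\<forall>\<beta> \<gamma>. \<beta> \<noteq> 0 \<and> \<gamma> \<noteq> 0 \<and> \<beta> + \<gamma> = a j - a i \<and>
          \<not> (\<exists>k. k \<noteq> i \<and> k \<noteq> j \<and>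
               ((\<beta> = a j - a k \<and> \<gamma> = a k - a i) \<or> (\<beta> = a k - a i \<and> \<gamma> = a j - a k)))
          \<longrightarrow> in_ideal U p (ser_scale (of_int (B \<beta> \<gamma>)) (ser_mult (f \<beta>) (f \<gamma>)))))"
  shows "form_in_ideal U p (covD U B f a j i)"
  unfolding form_in_ideal_def in_ideal_def
proof (intro allI impI ballI)
  fix r :: 'n and m :: "'n mono" and z assume m: "deg m < p" and z: "z \<in> U"
  have "a j - a i \<noteq> 0" using lin_indep_R_inj[OF indep] ij by (simp add: inj_eq)
  then obtain L where der: "(f (a j - a i) m has_derivative L) (at z)"
    using fR z unfolding in_R_def holo_on_def by blast
  from hyp show "covD U B f a j i r m z = 0"
  proof
    show "p \<le> len (a j - a i) \<Longrightarrow> ?thesis"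
      by (rule covD_vanishes_if_long[OF U(1) z m ij indep f_i der])
  qed (elim conjE, erule (1) covD_vanishes_if_cancelling[OF f_iii B indep ij z m der])
qed

end
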